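(* Let $d>1$ be a divisor of $n$ and let $A$ be the Dickson matrix of a $q$-polynomial $f\in\mathbb{F}_{q^n}[x]$ which is Loewy-reducible with respect to the partition $\{d\mathbb{Z}_n,\mathbb{Z}_n\setminus d\mathbb{Z}_n\}$, where $d\mathbb{Z}_n=\{0,d,\dots,n-d\}$. Then $f(x)=f'(x)+\lambda\sum_{i=1}^{d-1}b_i\,Tr_{q^n|q^d}(ax)^{q^i}$ for some $\lambda,a\in\mathbb{F}_{q^n}^*$, some $b_1,\dots,b_{d-1}\in\mathbb{F}_{q^d}$ not all zero, and some $\mathbb{F}_{q^d}$-linear map $f'$ of $\mathbb{F}_{q^n}$.
   Context: The Dickson matrix of $f(x)=\sum_{j=0}^{n-1}a_jx^{q^j}$ is the $n\times n$ matrix indexed by $\mathbb{Z}_n$ with $A[i|j]=a_{j-i}^{q^i}$. $A$ is Loewy-reducible with respect to a partition $\{\alpha,\beta\}$ of $\mathbb{Z}_n$ if $|\alpha|,|\beta|\ge2$ and $\mathrm{rank}\,A[\alpha|\beta]=\mathrm{rank}\,A[\beta|\alpha]=1$ ($A[\alpha|\beta]$: rows $\alpha$, columns $\beta$). $Tr_{q^n|q^d}(x)=x+x^{q^d}+\dots+x^{q^{n-d}}$. *)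

theory Defs
  imports "HOL-Computational_Algebra.Primes" "Jordan_Normal_Form.DL_Rank_Submatrix"
begin

(* Indices of Z_n are represented by {0..<n}. A q-polynomial
   f(x) = sum_{j<n} c_j x^(q^j) is given by its coefficient function c. *)

definition qpoly :: "nat \<Rightarrow> nat \<Rightarrow> (nat \<Rightarrow> 'a::field) \<Rightarrow> 'a \<Rightarrow> 'a" where
  "qpoly q n c x = (\<Sum>j<n. c j * x ^ (q ^ j))"

definition dickson_matrix :: "nat \<Rightarrow> nat \<Rightarrow> (nat \<Rightarrow> 'a::field) \<Rightarrow> 'a mat" where
  "dickson_matrix q n c = mat n n (\<lambda>(i, j). (c (nat ((int j - int i) mod int n))) ^ (q ^ i))"

definition mat_rank :: "'a::field mat \<Rightarrow> nat" where
  "mat_rank M = vec_space.rank (dim_row M) M"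

definition loewy_reducible :: "nat \<Rightarrow> 'a::field mat \<Rightarrow> nat set \<Rightarrow> nat set \<Rightarrow> bool" where
  "loewy_reducible n A \<alpha> \<beta> \<longleftrightarrow>
     \<alpha> \<union> \<beta> = {0..<n} \<and> \<alpha> \<inter> \<beta> = {} \<and> card \<alpha> \<ge> 2 \<and> card \<beta> \<ge> 2 \<and>
     mat_rank (submatrix A \<alpha> \<beta>) = 1 \<and> mat_rank (submatrix A \<beta> \<alpha>) = 1"

definition trace_rel :: "nat \<Rightarrow> nat \<Rightarrow> nat \<Rightarrow> 'a::field \<Rightarrow> 'a" where
  "trace_rel q n d x = (\<Sum>k<n div d. x ^ (q ^ (d * k)))"

definition subfield_q :: "nat \<Rightarrow> nat \<Rightarrow> 'a::field set" where
  "subfield_q q d = {x. x ^ (q ^ d) = x}"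

definition subfield_linear :: "nat \<Rightarrow> nat \<Rightarrow> ('a::field \<Rightarrow> 'a) \<Rightarrow> bool" where
  "subfield_linear q d g \<longleftrightarrow> (\<forall>x y. g (x + y) = g x + g y) \<and>
     (\<forall>c \<in> subfield_q q d. \<forall>x. g (c * x) = c * g x)"

end

theory Submission
  imports Defs "HOL-Number_Theory.Residues"
begin

text \<open>Read indices mod n, so that A[i|j] = c(j-i)^(q^i). The vanishing 2x2 minors of A[beta|alpha]
  in the columns 0 and d say that c(s+d) / c(s) = nu^(q^s) for all s outside dZ_n, with a single nu.
  Going once around a residue class mod d shows that nu has norm 1 down to F_(q^d), so by Hilbert 90
  nu = a^(q^d - 1), and then c(i+dk) = e(i) a^(q^(i+dk)) with e(i) depending only on i mod d.
  The vanishing minors of A[alpha|beta] in the rows 0 and d force the ratios e(i) / e(i0) into F_(q^d).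
  Splitting the q-polynomial along the residues mod d gives the trace terms, while the coefficients
  on dZ_n make up the F_(q^d)-linear part f'.\<close>

lemma card_power_eq_le:
  assumes "m > 0"
  shows "card {x::'a::field. x ^ m = y} \<le> m"
proof -
  let ?p = "Polynomial.monom (1::'a) m - [:y:]"
  have "?p = Polynomial.monom 1 m + [:- y:]"
    by simp
  also have "degree \<dots> = m"
    using assms by (subst degree_add_eq_left) (auto simp: degree_monom_eq)
  finally have deg: "degree ?p = m" .
  then have "?p \<noteq> 0"
    using assms by auto
  then have "card {x. poly ?p x = 0} \<le> m"
    using card_poly_roots_bound deg by metis
  moreover have "{x. poly ?p x = 0} = {x. x ^ m = y}"
    by (auto simp: poly_monom)
  ultimately show ?thesis
    by simp
qed

text \<open>Cf. \<open>finite_field_power_card_eq_same\<close>, which the library has only for the sort \<open>finite_field\<close>.\<close>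

lemma power_card_minus_1_eq_1:
  fixes x :: "'a::{finite,field}"
  assumes "x \<noteq> 0"
  shows "x ^ (card (UNIV :: 'a set) - 1) = 1"
proof -
  let ?U = "UNIV - {0 :: 'a}"
  have "bij_betw ((*) x) ?U ?U"
    using assms by (intro bij_betwI[where g = "\<lambda>y. y / x"]) auto
  then have "(\<Prod>y\<in>?U. x * y) = \<Prod>?U"
    by (rule prod.reindex_bij_betw)
  then have "x ^ card ?U * \<Prod>?U = 1 * \<Prod>?U"
    by (simp add: prod.distrib)
  moreover have "\<Prod>?U \<noteq> 0"
    by simp
  ultimately have "x ^ card ?U = 1"
    by (rule mult_right_cancel[THEN iffD1, rotated])
  then show ?thesis
    by (simp add: card_Diff_singleton)
qed

lemma power_card_eq_self:
  fixes x :: "'a::{finite,field}"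
  shows "x ^ card (UNIV :: 'a set) = x"
proof (cases "x = 0")
  case False
  have "card (UNIV :: 'a set) = Suc (card (UNIV :: 'a set) - 1)"
    using finite_UNIV_card_ge_0 [where ?'a = 'a] by simp
  then show ?thesis
    using power_card_minus_1_eq_1 [OF False] by (metis power_Suc mult_1_right)
qed (use finite_UNIV_card_ge_0 [where ?'a = 'a] in simp)

lemma prime_CHAR_finite_field: "prime CHAR('a::{finite,field})"
  by (rule prime_CHAR_semidom, rule finite_imp_CHAR_pos) simp

lemma CHAR_eq_prime_of_card:
  assumes "prime p" and "card (UNIV :: 'a::{finite,field} set) = p ^ e" and "e > 0"
  shows "CHAR('a) = p"
proof -
  have "CHAR('a) dvd p"
    using CHAR_dvd_CARD [where 'a = 'a] assms prime_CHAR_finite_field prime_dvd_power by metis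
  then show ?thesis
    using assms(1) prime_CHAR_finite_field primes_dvd_imp_eq by blast
qed

text \<open>Multiplicative Hilbert 90 for F_(Q^N) / F_Q: the kernel of the norm is the image of
  a \<mapsto> a^(Q-1). Counting suffices, since every fibre of this map has at most Q - 1 elements.\<close>

lemma power_image_eq_roots_of_unity:
  fixes K M :: nat
  assumes card: "card (UNIV :: 'a::{finite,field} set) = M * K + 1" and "K > 0" and "M > 0"
  shows "(\<lambda>a::'a. a ^ K) ` (UNIV - {0}) = {y. y ^ M = 1}"
proof (rule card_seteq)
  let ?U = "UNIV - {0 :: 'a}" and ?f = "\<lambda>a::'a. a ^ K"
  show "?f ` ?U \<subseteq> {y. y ^ M = 1}"
  proof clarify
    fix a :: 'a
    assume "a \<noteq> 0"
    then have "a ^ (M * K) = 1"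
      using power_card_minus_1_eq_1 [of a] by (simp add: card)
    then show "(a ^ K) ^ M = 1"
      by (simp add: power_mult [symmetric] mult.commute)
  qed
  have "?U = (\<Union>y\<in>?f ` ?U. {a\<in>?U. ?f a = y})"
    by auto
  then have "card ?U \<le> (\<Sum>y\<in>?f ` ?U. card {a\<in>?U. ?f a = y})"
    using card_UN_le [of "?f ` ?U" "\<lambda>y. {a\<in>?U. ?f a = y}"] by simp
  also have "\<dots> \<le> (\<Sum>y\<in>?f ` ?U. K)"
  proof (intro sum_mono)
    fix y
    have "card {a\<in>?U. ?f a = y} \<le> card {a::'a. a ^ K = y}"
      by (intro card_mono) auto
    also have "\<dots> \<le> K"
      using card_power_eq_le \<open>K > 0\<close> .
    finally show "card {a\<in>?U. ?f a = y} \<le> K" .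
  qed
  finally have "M * K \<le> card (?f ` ?U) * K"
    by (simp add: card_Diff_singleton card)
  then have "M \<le> card (?f ` ?U)"
    using \<open>K > 0\<close> by simp
  moreover have "card {y::'a. y ^ M = 1} \<le> M"
    using card_power_eq_le \<open>M > 0\<close> .
  ultimately show "card {y::'a. y ^ M = 1} \<le> card (?f ` ?U)"
    by linarith
qed simp

lemma hilbert90_finite_field:
  fixes \<nu> :: "'a::{finite,field}"
  assumes card: "card (UNIV :: 'a set) = Q ^ N" and "Q \<ge> 2" and "N > 0"
    and norm: "\<nu> ^ (\<Sum>l<N. Q ^ l) = 1"
  obtains a where "a \<noteq> 0" and "a ^ Q = \<nu> * a"
proof -
  define M where "M = (\<Sum>l<N. Q ^ l)"
  have "M \<ge> Q ^ 0"
    unfolding M_def using \<open>N > 0\<close> by (intro member_le_sum) auto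
  have "int (Q ^ N) = int (M * (Q - 1) + 1)"
    using power_diff_1_eq [of "int Q" N] \<open>Q \<ge> 2\<close> by (simp add: M_def of_nat_diff algebra_simps)
  then have "card (UNIV :: 'a set) = M * (Q - 1) + 1"
    unfolding card of_nat_eq_iff .
  then have "(\<lambda>a::'a. a ^ (Q - 1)) ` (UNIV - {0}) = {y. y ^ M = 1}"
    by (rule power_image_eq_roots_of_unity) (use \<open>Q \<ge> 2\<close> \<open>M \<ge> Q ^ 0\<close> in auto)
  then have "\<nu> \<in> (\<lambda>a::'a. a ^ (Q - 1)) ` (UNIV - {0})"
    using norm by (simp add: M_def)
  then obtain a where "a \<noteq> 0" "\<nu> = a ^ (Q - 1)"
    by auto
  moreover have "a ^ Q = a ^ (Q - 1) * a"
    using \<open>Q \<ge> 2\<close> by (simp flip: power_Suc2)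
  ultimately show ?thesis
    using that by simp
qed

definition frob :: "nat \<Rightarrow> nat \<Rightarrow> 'a::field \<Rightarrow> 'a" where
  "frob q e x = x ^ (q ^ e)"

lemma frob_0 [simp]: "frob q 0 x = x"
  by (simp add: frob_def)

lemma frob_one [simp]: "frob q e 1 = 1"
  by (simp add: frob_def)

lemma frob_mult: "frob q e (x * y) = frob q e x * frob q e y"
  by (simp add: frob_def power_mult_distrib)

lemma frob_divide: "frob q e (x / y) = frob q e x / frob q e y"
  by (simp add: frob_def power_divide)

lemma frob_frob: "frob q e (frob q e' x) = frob q (e + e') x"
  by (simp add: frob_def power_add power_mult [symmetric] mult.commute)

lemma frob_eq_0_iff [simp]: "q > 0 \<Longrightarrow> frob q e x = 0 \<longleftrightarrow> x = 0"
  by (simp add: frob_def)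

lemma frob_add_CHAR_power:
  fixes x y :: "'a::{finite,field}"
  assumes "q = CHAR('a) ^ k"
  shows "frob q e (x + y) = frob q e x + frob q e y"
  unfolding frob_def
  by (rule freshmans_dream' [where n = "k * e"]) (simp_all add: assms power_mult prime_CHAR_finite_field)

lemma frob_sum_CHAR_power:
  fixes f :: "'b \<Rightarrow> 'a::{finite,field}"
  assumes "q = CHAR('a) ^ k"
  shows "frob q e (sum f A) = (\<Sum>i\<in>A. frob q e (f i))"
  unfolding frob_def
  by (rule freshmans_dream_sum' [where n = "k * e"]) (simp_all add: assms power_mult prime_CHAR_finite_field)

lemma frob_period:
  fixes x :: "'a::{finite,field}"
  assumes "card (UNIV :: 'a set) = q ^ n"
  shows "frob q (n * t) x = x"
proof (induction t)
  case (Suc t)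
  have "frob q (n * Suc t) x = frob q n (frob q (n * t) x)"
    by (simp add: frob_frob)
  also have "\<dots> = x"
    using Suc power_card_eq_self [of x] assms by (simp add: frob_def)
  finally show ?case .
qed simp

lemma frob_mod:
  fixes x :: "'a::{finite,field}"
  assumes "card (UNIV :: 'a set) = q ^ n"
  shows "frob q e x = frob q (e mod n) x"
  using frob_frob [of q "e mod n" "n * (e div n)" x] frob_period [OF assms] by simp

lemma frob_inject:
  fixes x y :: "'a::{finite,field}"
  assumes "card (UNIV :: 'a set) = q ^ n" and "n > 0"
  shows "frob q e x = frob q e y \<longleftrightarrow> x = y"
proof
  assume "frob q e x = frob q e y"
  then have "frob q (n * e - e) (frob q e x) = frob q (n * e - e) (frob q e y)"
    by simp
  moreover have "n * e - e + e = n * e"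
    using \<open>n > 0\<close> by simp
  ultimately show "x = y"
    by (simp add: frob_frob frob_period [OF assms(1)])
qed simp

lemma frob_subfield:
  assumes "x \<in> subfield_q q d"
  shows "frob q (d * k) x = x"
proof (induction k)
  case (Suc k)
  have "frob q (d * Suc k) x = frob q d (frob q (d * k) x)"
    by (simp add: frob_frob)
  with Suc assms show ?case
    by (simp add: subfield_q_def frob_def)
qed simp

lemma subfield_linear_frob_sum:
  fixes g :: "nat \<Rightarrow> 'a::{finite,field}"
  assumes "q = CHAR('a) ^ k"
  shows "subfield_linear q d (\<lambda>x. \<Sum>j<N. g j * frob q (d * j) x)"
  unfolding subfield_linear_def
  by (simp add: frob_add_CHAR_power [OF assms] frob_mult frob_subfield
      distrib_left sum.distrib sum_distrib_left mult.left_commute)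

lemma sum_lessThan_mult_regroup:
  fixes g :: "nat \<Rightarrow> 'a::comm_monoid_add"
  shows "(\<Sum>j<d * N. g j) = (\<Sum>i<d. \<Sum>m<N. g (i + d * m))"
proof -
  have "(\<Sum>j<d * N. g j) = (\<Sum>m<N. \<Sum>j\<in>{m * d..<m * d + d}. g j)"
    using sum.nat_group [of g d N] by (simp add: mult.commute)
  also have "\<dots> = (\<Sum>m<N. \<Sum>i<d. g (i + d * m))"
  proof (rule sum.cong [OF refl])
    fix m
    show "(\<Sum>j\<in>{m * d..<m * d + d}. g j) = (\<Sum>i<d. g (i + d * m))"
      by (rule sum.reindex_bij_witness [of _ "\<lambda>i. i + m * d" "\<lambda>j. j - m * d"]) (auto simp: mult.commute)
  qed
  also have "\<dots> = (\<Sum>i<d. \<Sum>m<N. g (i + d * m))"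
    by (rule sum.swap)
  finally show ?thesis .
qed

lemma qpoly_block_decomposition:
  fixes c :: "nat \<Rightarrow> 'a::{finite,field}"
  assumes char: "q = CHAR('a) ^ k" and n: "n = d * N" and "d > 0"
    and shape: "\<And>i m. i \<in> {1..d-1} \<Longrightarrow> m < N \<Longrightarrow> c (i + d * m) = lam * b i * frob q (i + d * m) a"
  shows "qpoly q n c x = (\<Sum>m<N. c (d * m) * frob q (d * m) x)
           + lam * (\<Sum>i = 1..d-1. b i * trace_rel q n d (a * x) ^ (q ^ i))"
proof -
  have "qpoly q n c x = (\<Sum>i<d. \<Sum>m<N. c (i + d * m) * frob q (i + d * m) x)"
    unfolding qpoly_def n frob_def [symmetric] by (rule sum_lessThan_mult_regroup)
  also have "{..<d} = insert 0 {1..d-1}"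
    using \<open>d > 0\<close> by auto
  also have "(\<Sum>i\<in>insert 0 {1..d-1}. \<Sum>m<N. c (i + d * m) * frob q (i + d * m) x)
      = (\<Sum>m<N. c (d * m) * frob q (d * m) x) + (\<Sum>i = 1..d-1. \<Sum>m<N. c (i + d * m) * frob q (i + d * m) x)"
    by (subst sum.insert) auto
  also have "(\<Sum>i = 1..d-1. \<Sum>m<N. c (i + d * m) * frob q (i + d * m) x)
      = (\<Sum>i = 1..d-1. lam * (b i * trace_rel q n d (a * x) ^ (q ^ i)))"
  proof (rule sum.cong [OF refl])
    fix i
    assume i: "i \<in> {1..d-1}"
    have "(\<Sum>m<N. c (i + d * m) * frob q (i + d * m) x) = (\<Sum>m<N. lam * b i * frob q (i + d * m) (a * x))"
      using i by (intro sum.cong refl) (simp add: shape frob_mult)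
    moreover have "trace_rel q n d (a * x) ^ (q ^ i) = (\<Sum>m<N. frob q (i + d * m) (a * x))"
      using \<open>d > 0\<close> unfolding trace_rel_def n frob_def [symmetric]
      by (simp add: frob_sum_CHAR_power [OF char] frob_frob)
    ultimately show "(\<Sum>m<N. c (i + d * m) * frob q (i + d * m) x) = lam * (b i * trace_rel q n d (a * x) ^ (q ^ i))"
      by (simp add: sum_distrib_left mult.assoc)
  qed
  finally show ?thesis
    by (simp add: sum_distrib_left)
qed

lemma det_mat_2:
  "det (mat 2 2 f) = f (0, 0) * f (1, 1) - f (0, 1) * (f (1, 0) :: 'a::comm_ring_1)"
proof -
  have det_1: "det A = A $$ (0, 0)" if "A \<in> carrier_mat 1 1" for A :: "'a mat"
    using that by (subst laplace_expansion_column [where j = 0]) (auto simp: cofactor_def det_def)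
  show ?thesis
    by (subst laplace_expansion_column [where j = 0])
      (auto simp: numeral_2_eq_2 lessThan_Suc cofactor_def det_1 mat_delete_def)
qed

lemma pick_pair:
  assumes "(a::nat) < b"
  shows "pick {a, b} 0 = a" and "pick {a, b} (Suc 0) = b"
proof -
  show first: "pick {a, b} 0 = a"
    using assms by (auto intro!: Least_equality)
  show "pick {a, b} (Suc 0) = b"
    unfolding pick.simps(2) first using assms by (auto intro!: Least_equality)
qed

lemma pick_mem:
  assumes "i < card {a. a < m \<and> a \<in> S}"
  shows "pick S i \<in> S"
proof (cases "finite S")
  case True
  have "card {a. a < m \<and> a \<in> S} \<le> card S"
    using True by (intro card_mono) auto
  then show ?thesis
    using assms by (intro pick_in_set) auto
qed (auto intro: pick_in_set)

lemma rank_one_submatrix_minor_ordered: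
  fixes A :: "'a::field mat"
  assumes rank: "mat_rank (submatrix A I J) = 1"
    and "r1 \<in> I" "r2 \<in> I" "s1 \<in> J" "s2 \<in> J" "r2 < dim_row A" "s2 < dim_col A" "r1 < r2" "s1 < s2"
  shows "A $$ (r1, s1) * A $$ (r2, s2) = A $$ (r1, s2) * A $$ (r2, s1)"
proof (rule ccontr)
  assume minor: "\<not> ?thesis"
  define B where "B = submatrix A I J"
  define x1 x2 y1 y2 where "x1 = card {a\<in>I. a < r1}" "x2 = card {a\<in>I. a < r2}"
    "y1 = card {a\<in>J. a < s1}" "y2 = card {a\<in>J. a < s2}"
  have "x1 < x2" "y1 < y2"
    unfolding x1_x2_y1_y2_def by (intro psubset_card_mono; use assms in auto)+
  moreover have "x2 < dim_row B" "y2 < dim_col B"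
    unfolding x1_x2_y1_y2_def B_def dim_submatrix by (intro psubset_card_mono; use assms in auto)+
  moreover have "B $$ (x1, y1) = A $$ (r1, s1)" "B $$ (x1, y2) = A $$ (r1, s2)"
     "B $$ (x2, y1) = A $$ (r2, s1)" "B $$ (x2, y2) = A $$ (r2, s2)"
    unfolding B_def x1_x2_y1_y2_def by (rule submatrix_index_card; use assms in auto)+
  moreover have rows: "{i. i < dim_row B \<and> i \<in> {x1, x2}} = {x1, x2}"
    and cols: "{j. j < dim_col B \<and> j \<in> {y1, y2}} = {y1, y2}"
    using calculation by auto
  moreover have "submatrix B {x1, x2} {y1, y2} = mat 2 2 (\<lambda>(i, j). B $$ (pick {x1, x2} i, pick {y1, y2} j))"
    unfolding submatrix_def rows cols using calculation by (simp add: numeral_2_eq_2)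
  ultimately have "det (submatrix B {x1, x2} {y1, y2}) \<noteq> 0"
    using minor by (simp add: det_mat_2 pick_pair del: pick.simps)
  then have "card {j. j < dim_col B \<and> j \<in> {y1, y2}} \<le> mat_rank B"
    unfolding mat_rank_def by (intro vec_space.rank_gt_minor) auto
  then show False
    using rank \<open>y1 < y2\<close> unfolding cols by (simp add: B_def)
qed

lemma rank_one_submatrix_minor:
  fixes A :: "'a::field mat"
  assumes rank: "mat_rank (submatrix A I J) = 1" and "r1 \<in> I" "r2 \<in> I" "s1 \<in> J" "s2 \<in> J"
    and "r1 < dim_row A" "r2 < dim_row A" "s1 < dim_col A" "s2 < dim_col A"
  shows "A $$ (r1, s1) * A $$ (r2, s2) = A $$ (r1, s2) * A $$ (r2, s1)"
proof -
  note ordered = rank_one_submatrix_minor_ordered [OF rank]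
  consider "r1 = r2" | "s1 = s2" | "r1 < r2" "s1 < s2" | "r1 < r2" "s2 < s1"
    | "r2 < r1" "s1 < s2" | "r2 < r1" "s2 < s1"
    by linarith
  then show ?thesis
  proof cases
    case 3
    then show ?thesis using ordered [of r1 r2 s1 s2] assms by simp
  next
    case 4
    then show ?thesis using ordered [of r1 r2 s2 s1] assms by (simp add: ac_simps)
  next
    case 5
    then show ?thesis using ordered [of r2 r1 s1 s2] assms by (simp add: ac_simps)
  next
    case 6
    then show ?thesis using ordered [of r2 r1 s2 s1] assms by (simp add: ac_simps)
  qed auto
qed

lemma rank_one_submatrix_nonzero_entry:
  fixes A :: "'a::field mat"
  assumes rank: "mat_rank (submatrix A I J) = 1"
  obtains r s where "r \<in> I" "s \<in> J" "r < dim_row A" "s < dim_col A" "A $$ (r, s) \<noteq> 0"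
proof -
  define B where "B = submatrix A I J"
  have "\<exists>i < dim_row B. \<exists>j < dim_col B. B $$ (i, j) \<noteq> 0"
  proof (rule ccontr)
    assume "\<not> ?thesis"
    then have "B = 0\<^sub>m (dim_row B) (dim_col B)"
      by (intro eq_matI) auto
    then show False
      using rank vec_space.rank_0I unfolding B_def mat_rank_def by (metis zero_neq_one)
  qed
  then obtain i j where ij: "i < dim_row B" "j < dim_col B" "B $$ (i, j) \<noteq> 0"
    by blast
  then have i: "i < card {i. i < dim_row A \<and> i \<in> I}" and j: "j < card {j. j < dim_col A \<and> j \<in> J}"
    by (auto simp: B_def dim_submatrix)
  show ?thesis
    using that ij submatrix_index [OF i j] pick_le [OF i] pick_le [OF j] pick_mem [OF i] pick_mem [OF j]
    by (auto simp: B_def)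
qed

locale loewy_reducible_dickson =
  fixes q n d :: nat and c :: "nat \<Rightarrow> 'a::{finite,field}"
  assumes prime_power: "\<exists>p k. prime p \<and> k > 0 \<and> q = p ^ k"
    and n_pos: "n > 0"
    and card_field: "card (UNIV :: 'a set) = q ^ n"
    and d_gt_1: "d > 1"
    and d_dvd_n: "d dvd n"
    and reducible: "loewy_reducible n (dickson_matrix q n c) {i. i < n \<and> d dvd i} {i. i < n \<and> \<not> d dvd i}"
begin

abbreviation "A \<equiv> dickson_matrix q n c"
abbreviation "multiples \<equiv> {i. i < n \<and> d dvd i}"
abbreviation "non_multiples \<equiv> {i. i < n \<and> \<not> d dvd i}"

definition coef :: "int \<Rightarrow> 'a" where
  "coef z = c (nat (z mod int n))"

lemma q_eq_CHAR_power:
  obtains k where "q = CHAR('a) ^ k"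
proof -
  obtain p k where "prime p" "k > 0" "q = p ^ k"
    using prime_power by blast
  moreover have "CHAR('a) = p"
    using CHAR_eq_prime_of_card [of p "k * n"] calculation card_field n_pos by (simp add: power_mult)
  ultimately show ?thesis
    using that by blast
qed

lemma q_ge_2: "q \<ge> 2"
proof -
  obtain p k where "prime p" "k > 0" "q = p ^ k"
    using prime_power by blast
  then show ?thesis
    using prime_ge_2_nat [of p] self_le_power [of p k] by simp
qed

lemma q_pos: "q > 0"
  using q_ge_2 by simp

lemma coef_periodic: "coef (z + int n * t) = coef z"
  by (simp add: coef_def)

lemma coef_of_nat: "j < n \<Longrightarrow> coef (int j) = c j"
  by (simp add: coef_def)

lemma dickson_entry: "r < n \<Longrightarrow> s < n \<Longrightarrow> A $$ (r, s) = frob q r (coef (int s - int r))"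
  by (simp add: dickson_matrix_def coef_def frob_def)

lemma dickson_entry_reflected:
  assumes "0 < s" "s < n" "t < n"
  shows "A $$ (n - s, t) = frob q (n - s) (coef (int s + int t))"
proof -
  have "A $$ (n - s, t) = frob q (n - s) (coef (int t - int (n - s)))"
    using assms by (intro dickson_entry) auto
  also have "int t - int (n - s) = int s + int t + int n * (- 1)"
    using assms by (simp add: of_nat_diff)
  also have "coef \<dots> = coef (int s + int t)"
    by (rule coef_periodic)
  finally show ?thesis .
qed

lemma dim_dickson_matrix: "dim_row A = n" "dim_col A = n"
  by (simp_all add: dickson_matrix_def)

lemma two_le_quotient: "2 \<le> n div d"
proof -
  have "multiples \<subseteq> (*) d ` {..<n div d}"
  proof
    fix i
    assume "i \<in> multiples"
    then obtain k where "i = d * k" "d * k < n"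
      by (auto elim: dvdE)
    moreover have "n = d * (n div d)"
      using d_dvd_n by simp
    ultimately have "k < n div d"
      by (metis mult_less_cancel1)
    then show "i \<in> (*) d ` {..<n div d}"
      using \<open>i = d * k\<close> by blast
  qed
  then have "card multiples \<le> card ((*) d ` {..<n div d})"
    by (intro card_mono) simp_all
  also have "\<dots> \<le> n div d"
    using card_image_le [of "{..<n div d}" "(*) d"] by simp
  finally show ?thesis
    using reducible by (simp add: loewy_reducible_def)
qed

lemma rank_multiples_non_multiples: "mat_rank (submatrix A multiples non_multiples) = 1"
  and rank_non_multiples_multiples: "mat_rank (submatrix A non_multiples multiples) = 1"
  using reducible by (simp_all add: loewy_reducible_def)

lemma minor_multiple_rows:
  assumes "r1 \<in> multiples" "r2 \<in> multiples" "s1 \<in> non_multiples" "s2 \<in> non_multiples"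
  shows "A $$ (r1, s1) * A $$ (r2, s2) = A $$ (r1, s2) * A $$ (r2, s1)"
  by (rule rank_one_submatrix_minor [OF rank_multiples_non_multiples assms])
    (use assms in \<open>simp_all add: dim_dickson_matrix\<close>)

lemma minor_non_multiple_rows:
  assumes "r1 \<in> non_multiples" "r2 \<in> non_multiples" "s1 \<in> multiples" "s2 \<in> multiples"
  shows "A $$ (r1, s1) * A $$ (r2, s2) = A $$ (r1, s2) * A $$ (r2, s1)"
  by (rule rank_one_submatrix_minor [OF rank_non_multiples_multiples assms])
    (use assms in \<open>simp_all add: dim_dickson_matrix\<close>)

lemma nonzero_coef_non_multiple:
  obtains j where "j < n" "\<not> d dvd j" "c j \<noteq> 0"
proof -
  obtain r s where rs: "r \<in> multiples" "s \<in> non_multiples" "A $$ (r, s) \<noteq> 0"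
    by (rule rank_one_submatrix_nonzero_entry [OF rank_multiples_non_multiples])
  define j where "j = nat ((int s - int r) mod int n)"
  have "j < n"
    using n_pos by (simp add: j_def nat_less_iff)
  moreover have "c j \<noteq> 0"
    using rs dickson_entry [of r s] q_pos by (simp add: j_def coef_def)
  moreover have "\<not> d dvd j"
  proof
    assume "d dvd j"
    moreover have "int j = (int s - int r) mod int n"
      using n_pos by (simp add: j_def)
    ultimately have "int d dvd (int s - int r) mod int n"
      by (metis of_nat_dvd_iff)
    then have "int d dvd int s - int r"
      using d_dvd_n by (metis dvd_mod_iff of_nat_dvd_iff)
    moreover have "int d dvd int r"
      using rs by simp
    ultimately have "int d dvd int s"
      by (metis diff_add_cancel dvd_add)
    then show False
      using rs by simp
  qed
  ultimately show ?thesis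
    using that by blast
qed

lemma reflected_non_multiple:
  assumes "s < n" "\<not> d dvd s"
  shows "n - s \<in> non_multiples"
proof -
  have "\<not> d dvd n - s"
    using assms d_dvd_n by (metis diff_diff_cancel dvd_diff_nat less_imp_le_nat)
  then show ?thesis
    using assms by (cases s) auto
qed

lemma coef_cross_relation:
  assumes "s < n" "\<not> d dvd s" "t < n" "\<not> d dvd t"
  shows "coef (int s) * frob q (s + (n - t)) (coef (int t + int d))
       = coef (int s + int d) * frob q (s + (n - t)) (coef (int t))"
proof -
  have "0 < s" "0 < t" "0 < d" "d < n"
    using assms d_gt_1 two_le_quotient d_dvd_n by (auto intro!: Nat.gr0I elim!: dvdE)
  have "0 \<in> multiples" "d \<in> multiples"
    using \<open>d < n\<close> by auto
  then have "A $$ (n - s, 0) * A $$ (n - t, d) = A $$ (n - s, d) * A $$ (n - t, 0)"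
    using assms by (intro minor_non_multiple_rows reflected_non_multiple)
  then have "frob q (n - s) (coef (int s)) * frob q (n - t) (coef (int t + int d))
      = frob q (n - s) (coef (int s + int d)) * frob q (n - t) (coef (int t))"
    using assms \<open>0 < s\<close> \<open>0 < t\<close> \<open>d < n\<close> n_pos by (simp add: dickson_entry_reflected)
  from arg_cong [OF this, of "frob q s"] show ?thesis
    using assms frob_period [OF card_field, of 1] by (simp add: frob_mult frob_frob)
qed

text \<open>The ratio nu is read off at one index j with c(j) \<noteq> 0 and transported to all other s
  by \<open>coef_cross_relation\<close>.\<close>

lemma coef_recurrence:
  obtains \<nu> where "\<And>s. \<not> d dvd s \<Longrightarrow> coef (int s + int d) = frob q s \<nu> * coef (int s)"
proof -
  obtain j where j: "j < n" "\<not> d dvd j" "c j \<noteq> 0"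
    by (rule nonzero_coef_non_multiple)
  define \<nu> where "\<nu> = frob q (n - j) (coef (int j + int d) / coef (int j))"
  have reduced: "coef (int s + int d) = frob q s \<nu> * coef (int s)" if "s < n" "\<not> d dvd s" for s
  proof -
    let ?G = "frob q (s + (n - j))"
    have nonzero: "?G (coef (int j)) \<noteq> 0"
      using j q_pos by (simp add: coef_of_nat)
    then have ratio: "?G (coef (int j + int d)) = frob q s \<nu> * ?G (coef (int j))"
      by (simp add: \<nu>_def frob_frob frob_divide)
    have "coef (int s + int d) * ?G (coef (int j)) = frob q s \<nu> * coef (int s) * ?G (coef (int j))"
      using coef_cross_relation [OF that j(1,2)] unfolding ratio by (auto simp: ac_simps)
    then show ?thesis
      using nonzero by simp
  qed
  have "coef (int s + int d) = frob q s \<nu> * coef (int s)" if "\<not> d dvd s" for s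
  proof -
    have s: "int s = int (s mod n) + int n * int (s div n)"
      by (metis mod_mult_div_eq of_nat_add of_nat_mult add.commute)
    then have "int s + int d = int (s mod n) + int d + int n * int (s div n)"
      by simp
    then have "coef (int s + int d) = coef (int (s mod n) + int d)" and "coef (int s) = coef (int (s mod n))"
      using s by (simp_all only: coef_periodic)
    moreover have "\<not> d dvd s mod n"
      using that d_dvd_n by (metis dvd_mod_iff)
    ultimately show ?thesis
      using reduced [of "s mod n"] n_pos frob_mod [OF card_field, of s] by simp
  qed
  then show ?thesis
    using that by blast
qed

lemma add_mult_less:
  assumes "i < d" "m < n div d"
  shows "i + d * m < n"
proof -
  have "i + d * m < d * Suc m"
    using assms by simp
  also have "\<dots> \<le> d * (n div d)"
    using assms by (intro mult_le_mono2) simp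
  finally show ?thesis
    using d_dvd_n by simp
qed

lemma norm_eq_1:
  assumes rec: "\<And>s. \<not> d dvd s \<Longrightarrow> coef (int s + int d) = frob q s \<nu> * coef (int s)"
  shows "\<nu> ^ (\<Sum>l<n div d. (q ^ d) ^ l) = 1"
proof -
  define P where "P k = (\<Prod>l<k. frob q (d * l) \<nu>)" for k
  have iterate: "coef (int (j + d * k)) = frob q j (P k) * coef (int j)" if "\<not> d dvd j" for j k
  proof (induction k)
    case (Suc k)
    have "\<not> d dvd j + d * k"
      using that by (simp add: dvd_add_left_iff)
    then have "coef (int (j + d * Suc k)) = frob q (j + d * k) \<nu> * coef (int (j + d * k))"
      using rec [of "j + d * k"] by (simp add: algebra_simps)
    with Suc show ?case
      by (simp add: P_def frob_mult frob_frob)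
  qed (simp add: P_def)
  obtain j where j: "j < n" "\<not> d dvd j" "c j \<noteq> 0"
    by (rule nonzero_coef_non_multiple)
  have "coef (int (j + d * (n div d))) = coef (int j)"
    using d_dvd_n coef_periodic [of "int j" 1] by simp
  then have "frob q j (P (n div d)) = frob q j 1"
    using iterate [OF j(2), of "n div d"] j coef_of_nat by simp
  then have "P (n div d) = 1"
    using frob_inject [OF card_field n_pos] by blast
  moreover have "\<nu> ^ (\<Sum>l<n div d. (q ^ d) ^ l) = P (n div d)"
    by (simp add: P_def frob_def power_sum power_mult)
  ultimately show ?thesis
    by simp
qed

text \<open>With nu = a^(q^d - 1) the quotient c(s) / a^(q^s) is invariant under s \<mapsto> s + d.\<close>

lemma coef_eq_frob_mult:
  assumes rec: "\<And>s. \<not> d dvd s \<Longrightarrow> coef (int s + int d) = frob q s \<nu> * coef (int s)"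
    and a: "a \<noteq> 0" "frob q d a = \<nu> * a"
    and "\<not> d dvd i"
  shows "coef (int (i + d * k)) = frob q (i + d * k) a * (coef (int i) / frob q i a)"
proof (induction k)
  case 0
  show ?case
    using a q_pos by simp
next
  case (Suc k)
  have "coef (int (i + d * Suc k)) = frob q (i + d * k) \<nu> * coef (int (i + d * k))"
    using rec [of "i + d * k"] \<open>\<not> d dvd i\<close> by (simp add: dvd_add_left_iff algebra_simps)
  also have "\<dots> = frob q (i + d * k) (\<nu> * a) * (coef (int i) / frob q i a)"
    using Suc by (simp add: frob_mult)
  also have "\<dots> = frob q (i + d * Suc k) a * (coef (int i) / frob q i a)"
    unfolding a(2) [symmetric] frob_frob by (simp add: algebra_simps)
  finally show ?case .
qed

lemma ratio_fixed_by_frob: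
  assumes shape: "\<And>i k. 0 < i \<Longrightarrow> i < d \<Longrightarrow> coef (int (i + d * k)) = frob q (i + d * k) a * e i"
    and "a \<noteq> 0" and i: "0 < i" "i < d" and i': "0 < i'" "i' < d"
  shows "e i * frob q d (e i') = e i' * frob q d (e i)"
proof -
  have "i + d * 1 < n" "i' + d * 1 < n" "0 + d * 1 < n"
    using i i' two_le_quotient by (intro add_mult_less; simp)+
  then have "i + d \<in> non_multiples" "i' + d \<in> non_multiples" "0 \<in> multiples" "d \<in> multiples"
    using i i' by (auto simp: dvd_add_left_iff dest: dvd_imp_le)
  then have "A $$ (0, i + d) * A $$ (d, i' + d) = A $$ (0, i' + d) * A $$ (d, i + d)"
    by (intro minor_multiple_rows)
  then have "coef (int (i + d)) * frob q d (coef (int i')) = coef (int (i' + d)) * frob q d (coef (int i))"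
    using \<open>i + d \<in> non_multiples\<close> \<open>i' + d \<in> non_multiples\<close> n_pos by (simp add: dickson_entry)
  then have "(frob q (i + d) a * frob q (i' + d) a) * (e i * frob q d (e i'))
      = (frob q (i + d) a * frob q (i' + d) a) * (e i' * frob q d (e i))"
    using shape [OF i, of 1] shape [OF i', of 1] shape [OF i, of 0] shape [OF i', of 0]
    by (simp add: frob_mult frob_frob ac_simps)
  then show ?thesis
    using \<open>a \<noteq> 0\<close> q_pos by simp
qed

lemma coef_factorization:
  obtains a e where "a \<noteq> 0"
    and "\<And>i k. \<not> d dvd i \<Longrightarrow> coef (int (i + d * k)) = frob q (i + d * k) a * e i"
proof -
  obtain \<nu> where rec: "\<And>s. \<not> d dvd s \<Longrightarrow> coef (int s + int d) = frob q s \<nu> * coef (int s)"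
    by (rule coef_recurrence) blast
  have "card (UNIV :: 'a set) = (q ^ d) ^ (n div d)"
    using card_field d_dvd_n by (simp flip: power_mult)
  moreover have "q ^ d \<ge> 2"
    using q_ge_2 d_gt_1 self_le_power [of q d] by simp
  moreover have "n div d > 0"
    using two_le_quotient by simp
  ultimately obtain a where "a \<noteq> 0" "a ^ (q ^ d) = \<nu> * a"
    using norm_eq_1 [OF rec] by (rule hilbert90_finite_field)
  then have "frob q d a = \<nu> * a"
    by (simp add: frob_def)
  show ?thesis
  proof (rule that [of a "\<lambda>i. coef (int i) / frob q i a"])
    show "coef (int (i + d * k)) = frob q (i + d * k) a * (coef (int i) / frob q i a)" if "\<not> d dvd i" for i k
      using coef_eq_frob_mult [OF rec \<open>a \<noteq> 0\<close> \<open>frob q d a = \<nu> * a\<close> that] .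
  qed fact
qed

lemma coefficient_shape:
  obtains lam a b where "lam \<noteq> 0" "a \<noteq> 0"
    and "\<forall>i \<in> {1..d-1}. b i \<in> subfield_q q d" "\<exists>i \<in> {1..d-1}. b i \<noteq> 0"
    and "\<And>i m. i \<in> {1..d-1} \<Longrightarrow> m < n div d \<Longrightarrow> c (i + d * m) = lam * b i * frob q (i + d * m) a"
proof -
  obtain a e where a: "a \<noteq> 0"
    and shape: "\<And>i k. \<not> d dvd i \<Longrightarrow> coef (int (i + d * k)) = frob q (i + d * k) a * e i"
    by (rule coef_factorization) blast
  have shape': "coef (int (i + d * k)) = frob q (i + d * k) a * e i" if "0 < i" "i < d" for i k
    using that by (intro shape) (auto dest: dvd_imp_le)
  obtain j where j: "j < n" "\<not> d dvd j" "c j \<noteq> 0"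
    by (rule nonzero_coef_non_multiple)
  define i0 where "i0 = j mod d"
  have i0: "0 < i0" "i0 < d"
    using j d_gt_1 by (auto simp: i0_def dvd_eq_mod_eq_0)
  have "e i0 \<noteq> 0"
    using shape' [OF i0, of "j div d"] j coef_of_nat by (simp add: i0_def)
  define b where "b i = e i / e i0" for i
  show thesis
  proof (rule that [of "e i0" a b])
    show "\<forall>i \<in> {1..d-1}. b i \<in> subfield_q q d"
    proof
      fix i
      assume "i \<in> {1..d-1}"
      then have "0 < i" "i < d"
        by auto
      then have "e i * frob q d (e i0) = e i0 * frob q d (e i)"
        using ratio_fixed_by_frob [OF shape' a _ _ i0] by simp
      then show "b i \<in> subfield_q q d"
        using \<open>e i0 \<noteq> 0\<close> q_pos by (simp add: b_def subfield_q_def frob_def [symmetric] frob_divide field_simps)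
    qed
    show "\<exists>i \<in> {1..d-1}. b i \<noteq> 0"
      using i0 \<open>e i0 \<noteq> 0\<close> by (intro bexI [of _ i0]) (auto simp: b_def)
    show "c (i + d * m) = e i0 * b i * frob q (i + d * m) a" if "i \<in> {1..d-1}" "m < n div d" for i m
    proof -
      have "0 < i" "i < d"
        using that by auto
      then have "c (i + d * m) = frob q (i + d * m) a * e i"
        using shape' [of i m] add_mult_less [of i m] coef_of_nat [of "i + d * m"] \<open>m < n div d\<close> by simp
      then show ?thesis
        using \<open>e i0 \<noteq> 0\<close> by (simp add: b_def)
    qed
  qed (use \<open>e i0 \<noteq> 0\<close> a in auto)
qed

end

theorem mainTheorem13:
  fixes q n d :: nat and c :: "nat \<Rightarrow> 'a::{finite, field}"
  assumes q_pp: "\<exists>p k. prime p \<and> k > 0 \<and> q = p ^ k"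
    and n_pos: "n > 0"
    and card_field: "card (UNIV :: 'a set) = q ^ n"
    and d_gt: "d > 1" and d_dvd: "d dvd n"
    and red: "loewy_reducible n (dickson_matrix q n c) {i. i < n \<and> d dvd i} {i. i < n \<and> \<not> d dvd i}"
  shows "\<exists>lam a b f'. lam \<noteq> 0 \<and> a \<noteq> 0 \<and>
           (\<forall>i \<in> {1..d-1}. b i \<in> subfield_q q d) \<and> (\<exists>i \<in> {1..d-1}. b i \<noteq> 0) \<and>
           subfield_linear q d f' \<and>
           (\<forall>x. qpoly q n c x = f' x + lam * (\<Sum>i = 1..d-1. b i * (trace_rel q n d (a * x)) ^ (q ^ i)))"
proof -
  interpret loewy_reducible_dickson q n d c
    using assms by unfold_locales
  obtain lam a b where "lam \<noteq> 0" "a \<noteq> 0"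
    and "\<forall>i \<in> {1..d-1}. b i \<in> subfield_q q d" "\<exists>i \<in> {1..d-1}. b i \<noteq> 0"
    and shape: "\<And>i m. i \<in> {1..d-1} \<Longrightarrow> m < n div d \<Longrightarrow> c (i + d * m) = lam * b i * frob q (i + d * m) a"
    by (rule coefficient_shape) blast
  obtain k where char: "q = CHAR('a) ^ k"
    by (rule q_eq_CHAR_power)
  define f' where "f' x = (\<Sum>m<n div d. c (d * m) * frob q (d * m) x)" for x
  have "subfield_linear q d f'"
    unfolding f'_def by (rule subfield_linear_frob_sum [OF char])
  moreover have "qpoly q n c x = f' x + lam * (\<Sum>i = 1..d-1. b i * trace_rel q n d (a * x) ^ (q ^ i))" for x
    unfolding f'_def using d_dvd d_gt by (intro qpoly_block_decomposition [OF char _ _ shape]) auto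
  ultimately show ?thesis
    using \<open>lam \<noteq> 0\<close> \<open>a \<noteq> 0\<close> \<open>\<forall>i \<in> {1..d-1}. b i \<in> subfield_q q d\<close> \<open>\<exists>i \<in> {1..d-1}. b i \<noteq> 0\<close>
    by blast
qed

end
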